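(* Let $V$ be an $n$-dimensional real vector space with a non-degenerate inner product $g^\flat=\langle\,,\,\rangle$ of signature $\{p,q\}$, and let $r=\min(p,q)$. Let $\Pi$ be a totally degenerate linear subspace of dimension $r$ with basis $\{k_1,\dots,k_r\}$. Let $T$ be an $r$-dimensional subspace on which $g^\flat$ is negative definite (if $p\le q$) or positive definite (if $p\ge q$), and write $v=v^\parallel+v^\perp$ according to $V=T\oplus T^\perp$. Then: (i) $\{k_1^\parallel,\dots,k_r^\parallel\}$ is linearly independent; (ii) $\{k_1^\perp,\dots,k_r^\perp\}$ is linearly independent; (iii) $\Pi_T:=\operatorname{span}\{k_1^\parallel,\dots,k_r^\parallel,k_1^\perp,\dots,k_r^\perp\}$ is $2r$-dimensional, $g^\flat|_{\Pi_T}$ has signature $\{r,r\}$, and there is an orthonormal basis $\{e_1,\dots,e_{2r}\}$ of $\Pi_T$ with (a) $\operatorname{span}\{e_1,\dots,e_r\}=\operatorname{span}\{k_1^\parallel,\dots,k_r^\parallel\}$, (b) $\operatorname{span}\{e_{r+1},\dots,e_{2r}\}=\operatorname{span}\{k_1^\perp,\dots,k_r^\perp\}$, (c) $\Pi=\operatorname{span}\{e_1+e_{r+1},\dots,e_r+e_{2r}\}$; (iv) a vector $v\in V$ is orthogonal to $\Pi$ if and only if there exists $\overline v\in\Pi_T^\perp$ with $v-\overline v\in\Pi$.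
   Context: A linear subspace $\Pi\subset V$ is totally degenerate if $g^\flat$ restricted to $\Pi$ vanishes identically; such subspaces have dimension at most $\min(p,q)$. *)

theory Defs
  imports "HOL-Analysis.Analysis"
begin

text \<open>A symmetric bilinear form B on a finite-dimensional real vector space 'a
  (the Euclidean structure of 'a is only used for finite dimensionality;
  the relevant form is B).\<close>

definition nondeg_sym_form :: "('a::euclidean_space \<Rightarrow> 'a \<Rightarrow> real) \<Rightarrow> bool" where
  "nondeg_sym_form B \<longleftrightarrow> bilinear B \<and> (\<forall>x y. B x y = B y x) \<and>
     (\<forall>x. (\<forall>y. B x y = 0) \<longrightarrow> x = 0)"

definition pos_def_on :: "('a::real_vector \<Rightarrow> 'a \<Rightarrow> real) \<Rightarrow> 'a set \<Rightarrow> bool" where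
  "pos_def_on B S \<longleftrightarrow> (\<forall>x\<in>S. x \<noteq> 0 \<longrightarrow> B x x > 0)"

definition neg_def_on :: "('a::real_vector \<Rightarrow> 'a \<Rightarrow> real) \<Rightarrow> 'a set \<Rightarrow> bool" where
  "neg_def_on B S \<longleftrightarrow> (\<forall>x\<in>S. x \<noteq> 0 \<longrightarrow> B x x < 0)"

definition sig_pos :: "('a::euclidean_space \<Rightarrow> 'a \<Rightarrow> real) \<Rightarrow> 'a set \<Rightarrow> nat" where
  "sig_pos B W = Max {dim S | S. subspace S \<and> S \<subseteq> W \<and> pos_def_on B S}"

definition sig_neg :: "('a::euclidean_space \<Rightarrow> 'a \<Rightarrow> real) \<Rightarrow> 'a set \<Rightarrow> nat" where
  "sig_neg B W = Max {dim S | S. subspace S \<and> S \<subseteq> W \<and> neg_def_on B S}"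

definition totally_degenerate :: "('a::real_vector \<Rightarrow> 'a \<Rightarrow> real) \<Rightarrow> 'a set \<Rightarrow> bool" where
  "totally_degenerate B P \<longleftrightarrow> subspace P \<and> (\<forall>x\<in>P. \<forall>y\<in>P. B x y = 0)"

definition orth_compl :: "('a::real_vector \<Rightarrow> 'a \<Rightarrow> real) \<Rightarrow> 'a set \<Rightarrow> 'a set" where
  "orth_compl B S = {v. \<forall>t\<in>S. B v t = 0}"

definition par_part :: "('a::real_vector \<Rightarrow> 'a \<Rightarrow> real) \<Rightarrow> 'a set \<Rightarrow> 'a \<Rightarrow> 'a" where
  "par_part B T v = (THE t. t \<in> T \<and> v - t \<in> orth_compl B T)"

definition perp_part :: "('a::real_vector \<Rightarrow> 'a \<Rightarrow> real) \<Rightarrow> 'a set \<Rightarrow> 'a \<Rightarrow> 'a" where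
  "perp_part B T v = v - par_part B T v"

definition lin_indep_family :: "(nat \<Rightarrow> 'a::real_vector) \<Rightarrow> nat \<Rightarrow> bool" where
  "lin_indep_family f m \<longleftrightarrow> inj_on f {..<m} \<and> independent (f ` {..<m})"

definition orthonormal_basis :: "('a::real_vector \<Rightarrow> 'a \<Rightarrow> real) \<Rightarrow> 'a set \<Rightarrow> (nat \<Rightarrow> 'a) \<Rightarrow> nat \<Rightarrow> bool" where
  "orthonormal_basis B W e m \<longleftrightarrow> lin_indep_family e m \<and> span (e ` {..<m}) = W \<and>
     (\<forall>i<m. \<forall>j<m. i \<noteq> j \<longrightarrow> B (e i) (e j) = 0) \<and>
     (\<forall>i<m. B (e i) (e i) = 1 \<or> B (e i) (e i) = -1)"

end

theory Submission
  imports Defs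
begin

text \<open>By symmetry (replace \<open>B\<close> by \<open>-B\<close>) we may assume \<open>T\<close> negative definite; then
  \<open>r = p\<close>, so \<open>T\<close> is a maximal negative definite subspace, which forces \<open>T\<^sup>\<bottom>\<close> to be
  positive definite. Isotropy of \<open>\<Pi>\<close> gives \<open>\<langle>x\<^sup>\<parallel>, y\<^sup>\<parallel>\<rangle> = - \<langle>x\<^sup>\<bottom>, y\<^sup>\<bottom>\<rangle>\<close> for \<open>x, y \<in> \<Pi>\<close>;
  hence both projections are injective on \<open>\<Pi>\<close>, giving (i) and (ii). Lifting an orthonormal
  basis \<open>e\<^sub>1, \<dots>, e\<^sub>r\<close> of \<open>\<Pi>\<^sup>\<parallel>\<close> to \<open>p\<^sub>i \<in> \<Pi>\<close> and putting \<open>e\<^sub>r\<^sub>+\<^sub>i = p\<^sub>i\<^sup>\<bottom>\<close>,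
  the same identity makes \<open>e\<^sub>1, \<dots>, e\<^sub>2\<^sub>r\<close> orthonormal with \<open>e\<^sub>i + e\<^sub>r\<^sub>+\<^sub>i = p\<^sub>i\<close>.
  The signature of \<open>\<Pi>\<^sub>T\<close> follows since \<open>\<Pi>\<^sup>\<parallel>\<close> and \<open>\<Pi>\<^sup>\<bottom>\<close> are definite of opposite signs
  and of dimension \<open>r\<close> each, and (iv) by expanding in this basis.\<close>

lemma lin_indep_family_iff:
  "lin_indep_family f m \<longleftrightarrow> (\<forall>c. (\<Sum>i<m. c i *\<^sub>R f i) = 0 \<longrightarrow> (\<forall>i<m. c i = 0))"
proof
  assume "lin_indep_family f m"
  hence inj: "inj_on f {..<m}" and ind: "independent (f ` {..<m})"
    by (auto simp: lin_indep_family_def)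
  show "\<forall>c. (\<Sum>i<m. c i *\<^sub>R f i) = 0 \<longrightarrow> (\<forall>i<m. c i = 0)"
  proof (intro allI impI)
    fix c i assume zero: "(\<Sum>i<m. c i *\<^sub>R f i) = 0" and i: "i < m"
    define u where "u v = c (the_inv_into {..<m} f v)" for v
    have "(\<Sum>v\<in>f ` {..<m}. u v *\<^sub>R v) = (\<Sum>i<m. c i *\<^sub>R f i)"
      by (simp add: sum.reindex[OF inj] u_def the_inv_into_f_f[OF inj])
    hence "u (f i) = 0"
      using ind zero i dependent_finite[of "f ` {..<m}"] by auto
    thus "c i = 0" using i by (simp add: u_def the_inv_into_f_f[OF inj])
  qed
next
  assume coeffs: "\<forall>c. (\<Sum>i<m. c i *\<^sub>R f i) = 0 \<longrightarrow> (\<forall>i<m. c i = 0)"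
  have inj: "inj_on f {..<m}"
  proof (rule inj_onI, rule ccontr)
    fix i j assume ij: "i \<in> {..<m}" "j \<in> {..<m}" "f i = f j" "i \<noteq> j"
    define c where "c l = (if l = i then 1 else 0) - (if l = j then 1 else (0::real))" for l
    have "(\<Sum>l<m. c l *\<^sub>R f l) = (\<Sum>l<m. (if l = i then f l else 0) - (if l = j then f l else 0))"
      by (rule sum.cong) (auto simp: c_def scaleR_left_diff_distrib)
    also have "\<dots> = f i - f j" using ij by (simp add: sum_subtractf)
    finally have "(\<Sum>l<m. c l *\<^sub>R f l) = 0" using ij by simp
    hence "c i = 0" using coeffs ij by blast
    thus False using ij by (simp add: c_def)
  qed
  have "independent (f ` {..<m})"
    unfolding dependent_finite[OF finite_imageI[OF finite_lessThan]]
  proof (clarify)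
    fix u i assume "(\<Sum>v\<in>f ` {..<m}. u v *\<^sub>R v) = 0" "i < m" "u (f i) \<noteq> 0"
    thus False using coeffs[rule_format, of "\<lambda>i. u (f i)"] by (simp add: sum.reindex[OF inj])
  qed
  thus "lin_indep_family f m" using inj by (simp add: lin_indep_family_def)
qed

lemma bilinear_sum_left: "bilinear B \<Longrightarrow> B (\<Sum>i\<in>I. f i) y = (\<Sum>i\<in>I. B (f i) y)"
  using linear_sum[of "\<lambda>x. B x y"] by (simp add: bilinear_def)

lemma lin_indep_family_biorthogonal:
  fixes B :: "'a::real_vector \<Rightarrow> 'b::real_vector \<Rightarrow> real"
  assumes bil: "bilinear B"
    and dual: "\<And>i j. i < m \<Longrightarrow> j < m \<Longrightarrow> B (f i) (g j) = (if i = j then d j else 0)"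
    and nonzero: "\<And>j. j < m \<Longrightarrow> d j \<noteq> 0"
  shows "lin_indep_family f m"
  unfolding lin_indep_family_iff
proof (intro allI impI)
  fix c j assume zero: "(\<Sum>i<m. c i *\<^sub>R f i) = 0" and j: "j < m"
  have "0 = B (\<Sum>i<m. c i *\<^sub>R f i) (g j)" using zero bilinear_lzero[OF bil] by simp
  also have "\<dots> = (\<Sum>i<m. c i * (if i = j then d j else 0))"
    using j by (simp add: bilinear_sum_left[OF bil] bilinear_lmul[OF bil] dual)
  also have "\<dots> = c j * d j" using j by (simp add: if_distrib cong: if_cong)
  finally show "c j = 0" using nonzero j by simp
qed

lemma span_lin_indep_family_eq:
  fixes f :: "nat \<Rightarrow> 'a::euclidean_space"
  assumes "subspace V" "lin_indep_family f m" "\<And>i. i < m \<Longrightarrow> f i \<in> V" "dim V \<le> m"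
  shows "span (f ` {..<m}) = V"
proof
  have "card (f ` {..<m}) = m" using assms(2) by (simp add: lin_indep_family_def card_image)
  then show "V \<subseteq> span (f ` {..<m})"
    using card_ge_dim_independent[of "f ` {..<m}" V] assms by (auto simp: lin_indep_family_def)
  show "span (f ` {..<m}) \<subseteq> V" using assms(1,3) span_minimal[of "f ` {..<m}" V] by auto
qed

lemma dim_span_lin_indep_family: "lin_indep_family f m \<Longrightarrow> dim (span (f ` {..<m})) = m"
  by (simp add: lin_indep_family_def dim_eq_card_independent card_image)

lemma orth_compl_subspace: "bilinear B \<Longrightarrow> subspace (orth_compl B S)"
  by (auto simp: orth_compl_def subspace_def bilinear_ladd bilinear_lmul bilinear_lzero)

lemma orth_compl_span: "bilinear B \<Longrightarrow> orth_compl B (span S) = orth_compl B S"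
proof (intro equalityI subsetI)
  fix v assume bil: "bilinear B" and v: "v \<in> orth_compl B S"
  have "subspace {x. B v x = 0}"
    using bil by (auto simp: subspace_def bilinear_radd bilinear_rmul bilinear_rzero)
  hence "span S \<subseteq> {x. B v x = 0}" using v by (intro span_minimal) (auto simp: orth_compl_def)
  thus "v \<in> orth_compl B (span S)" by (auto simp: orth_compl_def)
qed (auto simp: orth_compl_def intro: span_base)

lemma orth_hyperplane:
  fixes B :: "'a::euclidean_space \<Rightarrow> 'a \<Rightarrow> real"
  assumes bil: "bilinear B" and W: "subspace W" and w: "w \<in> W" "B w w \<noteq> 0"
  shows "subspace {u\<in>W. B u w = 0}" and "dim {u\<in>W. B u w = 0} + 1 = dim W"
proof -
  define H where "H = {u\<in>W. B u w = 0}"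
  show H: "subspace {u\<in>W. B u w = 0}" using W
    by (auto simp: subspace_def bilinear_ladd[OF bil] bilinear_lmul[OF bil] bilinear_lzero[OF bil])
  have "span (insert w H) = W"
  proof
    show "span (insert w H) \<subseteq> W" using W w by (intro span_minimal) (auto simp: H_def)
    show "W \<subseteq> span (insert w H)"
    proof
      fix u assume u: "u \<in> W"
      have "u - (B u w / B w w) *\<^sub>R w \<in> H" using u w W
        by (auto simp: H_def bilinear_lsub[OF bil] bilinear_lmul[OF bil] subspace_diff subspace_scale)
      thus "u \<in> span (insert w H)" unfolding span_breakdown_eq using span_base by blast
    qed
  qed
  moreover have "w \<notin> span H"
  proof -
    have "span H = H" using H by (simp add: H_def)
    moreover have "w \<notin> H" using w by (simp add: H_def)
    ultimately show ?thesis by metis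
  qed
  ultimately show "dim {u\<in>W. B u w = 0} + 1 = dim W"
    unfolding H_def[symmetric] by (metis dim_insert dim_span Suc_eq_plus1)
qed

lemma neg_def_orthonormal_family_exists:
  fixes B :: "'a::euclidean_space \<Rightarrow> 'a \<Rightarrow> real"
  assumes bil: "bilinear B" and sym: "\<And>x y. B x y = B y x"
  shows "subspace W \<Longrightarrow> neg_def_on B W \<Longrightarrow> \<exists>e. (\<forall>i<dim W. e i \<in> W) \<and>
     (\<forall>i<dim W. \<forall>j<dim W. B (e i) (e j) = (if i = j then -1 else 0))"
proof (induction "dim W" arbitrary: W)
  case 0 then show ?case by (metis less_nat_zero_code)
next
  case (Suc m W)
  then obtain w where w: "w \<in> W" "w \<noteq> 0" using dim_eq_0[of W] by fastforce
  have neg: "B w w < 0" using Suc.prems(2) w by (auto simp: neg_def_on_def)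
  define H where "H = {u\<in>W. B u w = 0}"
  have H: "subspace H" "dim H = m"
    using orth_hyperplane[OF bil Suc.prems(1) w(1)] neg Suc.hyps(2) by (auto simp: H_def)
  moreover have "neg_def_on B H" using Suc.prems(2) by (auto simp: neg_def_on_def H_def)
  ultimately obtain e' where e': "\<forall>i<m. e' i \<in> H"
    "\<forall>i<m. \<forall>j<m. B (e' i) (e' j) = (if i = j then -1 else 0)"
    using Suc.hyps(1) by metis
  define c where "c = 1 / sqrt (- B w w)"
  have cc: "c * c * B w w = -1" using neg by (simp add: c_def field_simps)
  have cross: "B (e' i) (c *\<^sub>R w) = 0" "B (c *\<^sub>R w) (e' i) = 0" if "i < m" for i
    using e'(1) that sym[of w] by (auto simp: H_def bilinear_lmul[OF bil] bilinear_rmul[OF bil])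
  show ?case
  proof (intro exI[of _ "e'(m := c *\<^sub>R w)"] conjI allI impI)
    fix i j assume i: "i < dim W" and j: "j < dim W"
    show "(e'(m := c *\<^sub>R w)) i \<in> W" using i e'(1) w Suc.prems(1) Suc.hyps(2)
      by (auto simp: H_def subspace_scale less_Suc_eq)
    show "B ((e'(m := c *\<^sub>R w)) i) ((e'(m := c *\<^sub>R w)) j) = (if i = j then -1 else 0)"
      using i j Suc.hyps(2) e'(2) cross cc
      by (auto simp: less_Suc_eq bilinear_lmul[OF bil] bilinear_rmul[OF bil])
  qed
qed

lemma Max_dim_eqI:
  fixes Q :: "'a::real_vector set \<Rightarrow> bool"
  assumes "Q S0" "dim S0 = r" "\<And>S. Q S \<Longrightarrow> dim S \<le> r"
  shows "Max {dim S | S. Q S} = r"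
proof (rule Max_eqI)
  show "finite {dim S | S. Q S}" by (rule finite_subset[of _ "{..r}"]) (use assms(3) in auto)
qed (use assms in auto)

lemma dim_le_sig_neg:
  fixes B :: "'a::euclidean_space \<Rightarrow> 'a \<Rightarrow> real"
  assumes "subspace S" "neg_def_on B S"
  shows "dim S \<le> sig_neg B UNIV"
  unfolding sig_neg_def
proof (rule Max_ge)
  show "finite {dim S |S. subspace S \<and> S \<subseteq> UNIV \<and> neg_def_on B S}"
    by (rule finite_subset[of _ "{..dim (UNIV::'a set)}"]) (auto simp del: dim_UNIV intro: dim_subset)
qed (use assms in blast)

lemma pos_neg_def_Int:
  assumes "pos_def_on B S" "neg_def_on B A"
  shows "S \<inter> A \<subseteq> {0}"
  using assms by (force simp: pos_def_on_def neg_def_on_def)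

lemma sig_pos_eqI:
  fixes B :: "'a::euclidean_space \<Rightarrow> 'a \<Rightarrow> real"
  assumes W: "subspace W"
    and S0: "subspace S0" "S0 \<subseteq> W" "pos_def_on B S0"
    and A: "subspace A" "A \<subseteq> W" "neg_def_on B A"
    and dims: "dim S0 + dim A = dim W"
  shows "sig_pos B W = dim S0"
  unfolding sig_pos_def
proof (rule Max_dim_eqI)
  fix S assume "subspace S \<and> S \<subseteq> W \<and> pos_def_on B S"
  hence S: "subspace S" "S \<subseteq> W" "pos_def_on B S" by auto
  have "dim (S \<inter> A) = 0" using pos_neg_def_Int[OF S(3) A(3)] by simp
  moreover have "dim {x + y |x y. x \<in> S \<and> y \<in> A} \<le> dim W"
    using S A W by (intro dim_subset) (auto intro: subspace_add)
  ultimately show "dim S \<le> dim S0" using dim_sums_Int[OF S(1) A(1)] dims by linarith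
qed (use S0 in auto)

section \<open>Negating the form\<close>

lemma bilinear_uminus: "bilinear B \<Longrightarrow> bilinear (\<lambda>x y. - B x y)"
  unfolding bilinear_def by (auto intro: linear_compose_neg)

lemma pos_def_on_uminus: "pos_def_on (\<lambda>x y. - B x y) S = neg_def_on B S"
  by (simp add: pos_def_on_def neg_def_on_def)

lemma neg_def_on_uminus: "neg_def_on (\<lambda>x y. - B x y) S = pos_def_on B S"
  by (simp add: pos_def_on_def neg_def_on_def)

lemma sig_pos_uminus: "sig_pos (\<lambda>x y. - B x y) W = sig_neg B W"
  by (simp add: sig_pos_def sig_neg_def pos_def_on_uminus)

lemma sig_neg_uminus: "sig_neg (\<lambda>x y. - B x y) W = sig_pos B W"
  by (simp add: sig_pos_def sig_neg_def neg_def_on_uminus)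

lemma sig_neg_eqI:
  fixes B :: "'a::euclidean_space \<Rightarrow> 'a \<Rightarrow> real"
  assumes "subspace W" "subspace S0" "S0 \<subseteq> W" "neg_def_on B S0"
    "subspace A" "A \<subseteq> W" "pos_def_on B A" "dim S0 + dim A = dim W"
  shows "sig_neg B W = dim S0"
  using sig_pos_eqI[of W S0 "\<lambda>x y. - B x y" A] assms
  by (simp add: sig_pos_uminus pos_def_on_uminus neg_def_on_uminus)

lemma totally_degenerate_uminus: "totally_degenerate (\<lambda>x y. - B x y) P = totally_degenerate B P"
  by (simp add: totally_degenerate_def)

lemma orth_compl_uminus: "orth_compl (\<lambda>x y. - B x y) S = orth_compl B S"
  by (simp add: orth_compl_def)

lemma par_part_uminus: "par_part (\<lambda>x y. - B x y) T = par_part B T"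
  by (simp add: par_part_def orth_compl_uminus fun_eq_iff)

lemma perp_part_uminus: "perp_part (\<lambda>x y. - B x y) T = perp_part B T"
  by (simp add: perp_part_def par_part_uminus fun_eq_iff)

lemma orthonormal_basis_uminus:
  "orthonormal_basis (\<lambda>x y. - B x y) W e m = orthonormal_basis B W e m"
  by (auto simp: orthonormal_basis_def)

section \<open>Orthogonal decomposition along a maximal negative definite subspace\<close>

lemma quadratic_neg_value:
  fixes b c :: real
  assumes "b \<noteq> 0"
  shows "\<exists>t. 2 * t * b + t * t * c < 0"
proof -
  define t where "t = - b / (\<bar>c\<bar> + 1)"
  have "b * b > 0" using assms not_real_square_gt_zero[of b] by blast
  hence pos: "b * b / (\<bar>c\<bar> + 1) > 0" by simp
  have "t * t * c \<le> t * t * \<bar>c\<bar>" by (simp add: mult_left_mono)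
  also have "\<dots> = (b * b / (\<bar>c\<bar> + 1)) * (\<bar>c\<bar> / (\<bar>c\<bar> + 1))" by (simp add: t_def)
  also have "\<dots> < b * b / (\<bar>c\<bar> + 1)"
    using mult_strict_left_mono[of "\<bar>c\<bar> / (\<bar>c\<bar> + 1)" 1, OF _ pos] by simp
  also have "\<dots> = - 2 * t * b - b * b / (\<bar>c\<bar> + 1)" by (simp add: t_def)
  finally show ?thesis using pos by (intro exI[of _ t]) linarith
qed

locale maximal_neg_def_subspace =
  fixes B :: "'a::euclidean_space \<Rightarrow> 'a \<Rightarrow> real" and T :: "'a set"
  assumes bil: "bilinear B" and sym: "\<And>x y. B x y = B y x"
    and nondeg: "\<And>x. (\<forall>y. B x y = 0) \<Longrightarrow> x = 0"
    and subspace_T: "subspace T" and neg_def_T: "neg_def_on B T"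
    and maximal: "\<And>S. subspace S \<Longrightarrow> neg_def_on B S \<Longrightarrow> dim S \<le> dim T"
begin

abbreviation "Tperp \<equiv> orth_compl B T"
abbreviation "par \<equiv> par_part B T"
abbreviation "perp \<equiv> perp_part B T"

lemma subspace_Tperp: "subspace Tperp"
  by (rule orth_compl_subspace[OF bil])

lemma orth_T_Tperp: "t \<in> T \<Longrightarrow> x \<in> Tperp \<Longrightarrow> B t x = 0" "t \<in> T \<Longrightarrow> x \<in> Tperp \<Longrightarrow> B x t = 0"
  by (simp_all add: orth_compl_def sym[of t])

lemma decomposition_exists: "\<exists>t\<in>T. v - t \<in> Tperp"
proof -
  obtain f where f: "\<And>i. i < dim T \<Longrightarrow> f i \<in> T"
    "\<And>i j. i < dim T \<Longrightarrow> j < dim T \<Longrightarrow> B (f i) (f j) = (if i = j then -1 else 0)"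
    using neg_def_orthonormal_family_exists[OF bil sym subspace_T neg_def_T] by blast
  have "span (f ` {..<dim T}) = T"
    by (rule span_lin_indep_family_eq[OF subspace_T lin_indep_family_biorthogonal[OF bil f(2)]])
      (simp_all add: f(1))
  define t where "t = (\<Sum>i<dim T. (- B v (f i)) *\<^sub>R f i)"
  have "t \<in> T" unfolding t_def using f(1) subspace_T by (intro subspace_sum subspace_scale) auto
  moreover have "B (v - t) (f j) = 0" if "j < dim T" for j
  proof -
    have "B t (f j) = (\<Sum>i<dim T. - B v (f i) * (if i = j then -1 else 0))"
      using that by (simp add: t_def bilinear_sum_left[OF bil] bilinear_lmul[OF bil] bilinear_lneg[OF bil] f(2))
    also have "\<dots> = B v (f j)" using that by (simp add: if_distrib cong: if_cong)
    finally show ?thesis by (simp add: bilinear_lsub[OF bil])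
  qed
  hence "v - t \<in> orth_compl B (span (f ` {..<dim T}))"
    unfolding orth_compl_span[OF bil] by (auto simp: orth_compl_def)
  ultimately show ?thesis using \<open>span (f ` {..<dim T}) = T\<close> by auto
qed

lemma decomposition_unique:
  assumes "t \<in> T" "v - t \<in> Tperp" "t' \<in> T" "v - t' \<in> Tperp" shows "t = t'"
proof (rule ccontr)
  assume "t \<noteq> t'"
  moreover have d: "t - t' \<in> T" using assms subspace_T by (simp add: subspace_diff)
  moreover have "B (t - t') (t - t') = B (v - t') (t - t') - B (v - t) (t - t')"
    by (simp add: bilinear_lsub[OF bil])
  hence "B (t - t') (t - t') = 0" using orth_T_Tperp(2)[OF d] assms by simp
  ultimately show False using neg_def_T by (auto simp: neg_def_on_def)
qed

lemma par_part_mem: "par v \<in> T" and perp_part_mem: "perp v \<in> Tperp"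
proof -
  have "\<exists>!t. t \<in> T \<and> v - t \<in> Tperp" using decomposition_exists decomposition_unique by blast
  from theI'[OF this] show "par v \<in> T" "perp v \<in> Tperp" by (auto simp: par_part_def perp_part_def)
qed

lemma par_part_eqI: "t \<in> T \<Longrightarrow> v - t \<in> Tperp \<Longrightarrow> par v = t"
  using decomposition_unique par_part_mem perp_part_mem by (metis perp_part_def)

lemma par_plus_perp: "par v + perp v = v"
  by (simp add: perp_part_def)

lemma linear_par_part: "linear par"
proof (rule linearI)
  fix x y and c :: real
  show "par (x + y) = par x + par y"
    using par_part_mem perp_part_mem subspace_T subspace_Tperp
    by (intro par_part_eqI) (auto simp: perp_part_def add_diff_add intro: subspace_add)
  show "par (c *\<^sub>R x) = c *\<^sub>R par x"
    using par_part_mem perp_part_mem subspace_T subspace_Tperp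
    by (intro par_part_eqI) (auto simp: perp_part_def scaleR_right_diff_distrib[symmetric] intro: subspace_scale)
qed

lemma linear_perp_part: "linear perp"
proof -
  have "perp = (\<lambda>v. v - par v)" by (simp add: perp_part_def fun_eq_iff)
  thus ?thesis using linear_compose_sub[OF linear_id linear_par_part] by (simp add: id_def)
qed

text \<open>A negative vector of \<open>Tperp\<close> would enlarge the maximal negative definite subspace \<open>T\<close>.\<close>

lemma Tperp_not_neg: "x \<in> Tperp \<Longrightarrow> \<not> B x x < 0"
proof
  assume x: "x \<in> Tperp" and neg: "B x x < 0"
  have spT: "span T = T" using subspace_T by simp
  have "x \<notin> T" using x neg orth_T_Tperp[of x x] by auto
  hence "dim (span (insert x T)) = dim T + 1" using dim_insert[of x T] spT by simp
  moreover have "neg_def_on B (span (insert x T))" unfolding neg_def_on_def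
  proof (intro ballI impI)
    fix y assume "y \<in> span (insert x T)" "y \<noteq> 0"
    then obtain c t where t: "t \<in> T" and y: "y = t + c *\<^sub>R x" and nz: "t \<noteq> 0 \<or> c \<noteq> 0"
      unfolding span_breakdown_eq spT by (metis add.commute diff_add_cancel scaleR_zero_left add_0)
    have "B y y = B t t + c * c * B x x"
      using orth_T_Tperp[OF t x] unfolding y
      by (simp add: bilinear_ladd[OF bil] bilinear_radd[OF bil] bilinear_lmul[OF bil] bilinear_rmul[OF bil])
    moreover have "B t t \<le> 0" "t \<noteq> 0 \<Longrightarrow> B t t < 0"
      using neg_def_T t bilinear_lzero[OF bil] by (force simp: neg_def_on_def)+
    moreover have "c * c * B x x \<le> 0" using neg by (simp add: mult_nonneg_nonpos)
    moreover have "c \<noteq> 0 \<Longrightarrow> c * c * B x x < 0" using neg by (metis mult_pos_neg not_real_square_gt_zero)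
    ultimately show "B y y < 0" using nz by linarith
  qed
  ultimately show False using maximal[of "span (insert x T)"] by simp
qed

text \<open>By nondegeneracy an isotropic \<open>x \<in> Tperp\<close> pairs nontrivially with some \<open>z \<in> Tperp\<close>,
  and then some \<open>x + t z\<close> is a negative vector of \<open>Tperp\<close>.\<close>

lemma pos_def_Tperp: "pos_def_on B Tperp"
  unfolding pos_def_on_def
proof (intro ballI impI, rule ccontr)
  fix x assume x: "x \<in> Tperp" "x \<noteq> 0" and "\<not> B x x > 0"
  hence isotropic: "B x x = 0" using Tperp_not_neg by force
  obtain y where "B x y \<noteq> 0" using nondeg x by blast
  moreover have "B x (par y) = 0" using orth_T_Tperp(2)[OF par_part_mem x(1)] .
  ultimately have "B x (perp y) \<noteq> 0" by (simp add: perp_part_def bilinear_rsub[OF bil])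
  then obtain t where t: "2 * t * B x (perp y) + t * t * B (perp y) (perp y) < 0"
    using quadratic_neg_value by blast
  have "B (x + t *\<^sub>R perp y) (x + t *\<^sub>R perp y) = 2 * t * B x (perp y) + t * t * B (perp y) (perp y)"
    using isotropic sym[of "perp y" x]
    by (simp add: bilinear_ladd[OF bil] bilinear_radd[OF bil] bilinear_lmul[OF bil] bilinear_rmul[OF bil] algebra_simps)
  moreover have "x + t *\<^sub>R perp y \<in> Tperp"
    using x perp_part_mem subspace_Tperp by (simp add: subspace_add subspace_scale)
  ultimately show False using Tperp_not_neg[of "x + t *\<^sub>R perp y"] t by simp
qed

end

section \<open>Projections of a totally degenerate subspace\<close>

locale degenerate_pair = maximal_neg_def_subspace +
  fixes P :: "'a set" and k :: "nat \<Rightarrow> 'a"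
  assumes tdeg_P: "totally_degenerate B P" and dim_P: "dim P = dim T"
    and k_indep: "lin_indep_family k (dim T)" and k_span: "span (k ` {..<dim T}) = P"
begin

abbreviation "r \<equiv> dim T"
abbreviation "Kpar \<equiv> span ((\<lambda>i. par (k i)) ` {..<r})"
abbreviation "Kperp \<equiv> span ((\<lambda>i. perp (k i)) ` {..<r})"
abbreviation "PT \<equiv> span ((\<lambda>i. par (k i)) ` {..<r} \<union> (\<lambda>i. perp (k i)) ` {..<r})"

lemma subspace_P: "subspace P"
  using tdeg_P by (simp add: totally_degenerate_def)

lemma isotropic_P: "x \<in> P \<Longrightarrow> y \<in> P \<Longrightarrow> B x y = 0"
  using tdeg_P by (simp add: totally_degenerate_def)

lemma par_perp_on_P:
  assumes "x \<in> P" "y \<in> P" shows "B (par x) (par y) = - B (perp x) (perp y)"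
proof -
  have "0 = B (par x + perp x) (par y + perp y)" using isotropic_P assms by (simp add: par_plus_perp)
  also have "\<dots> = B (par x) (par y) + B (perp x) (perp y)"
    using orth_T_Tperp[OF par_part_mem perp_part_mem]
    by (simp add: bilinear_ladd[OF bil] bilinear_radd[OF bil])
  finally show ?thesis by simp
qed

lemma par_part_eq_0_on_P:
  assumes "x \<in> P" "par x = 0" shows "x = 0"
proof -
  have "B (perp x) (perp x) = 0"
    using par_perp_on_P[OF assms(1) assms(1)] assms(2) bilinear_lzero[OF bil] by simp
  hence "perp x = 0" using pos_def_Tperp perp_part_mem unfolding pos_def_on_def by force
  thus ?thesis using par_plus_perp[of x] assms(2) by simp
qed

lemma perp_part_eq_0_on_P:
  assumes "x \<in> P" "perp x = 0" shows "x = 0"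
proof -
  have "B (par x) (par x) = 0"
    using par_perp_on_P[OF assms(1) assms(1)] assms(2) bilinear_lzero[OF bil] by simp
  hence "par x = 0" using neg_def_T par_part_mem unfolding neg_def_on_def by force
  thus ?thesis using par_plus_perp[of x] assms(2) by simp
qed

lemma lin_indep_family_image_k:
  assumes g: "linear g" and kernel: "\<And>x. x \<in> P \<Longrightarrow> g x = 0 \<Longrightarrow> x = 0"
  shows "lin_indep_family (\<lambda>i. g (k i)) r"
  unfolding lin_indep_family_iff
proof (rule allI, rule impI)
  fix c assume "(\<Sum>i<r. c i *\<^sub>R g (k i)) = 0"
  hence "g (\<Sum>i<r. c i *\<^sub>R k i) = 0" by (simp add: linear_sum[OF g] linear_scale[OF g])
  moreover have "(\<Sum>i<r. c i *\<^sub>R k i) \<in> P"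
    using subspace_P k_span span_base[of _ "k ` {..<r}"] by (intro subspace_sum subspace_scale) auto
  ultimately show "\<forall>i<r. c i = 0" using kernel k_indep unfolding lin_indep_family_iff by blast
qed

lemma lin_indep_par_k: "lin_indep_family (\<lambda>i. par (k i)) r"
  by (rule lin_indep_family_image_k[OF linear_par_part par_part_eq_0_on_P])

lemma lin_indep_perp_k: "lin_indep_family (\<lambda>i. perp (k i)) r"
  by (rule lin_indep_family_image_k[OF linear_perp_part perp_part_eq_0_on_P])

lemma Kpar_eq: "Kpar = par ` P" and Kperp_eq: "Kperp = perp ` P"
  using span_linear_image[OF linear_par_part, of "k ` {..<r}"]
    span_linear_image[OF linear_perp_part, of "k ` {..<r}"]
  by (simp_all add: k_span image_image)

lemma Kpar_subset_T: "Kpar \<subseteq> T" and Kperp_subset_Tperp: "Kperp \<subseteq> Tperp"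
  using par_part_mem perp_part_mem by (auto simp: Kpar_eq Kperp_eq)

lemma P_subset_PT: "P \<subseteq> PT"
proof -
  have "k i \<in> PT" if "i < r" for i
  proof -
    have "par (k i) \<in> PT" "perp (k i) \<in> PT" using that by (auto intro: span_base)
    hence "par (k i) + perp (k i) \<in> PT" by (rule span_add)
    thus ?thesis by (simp add: par_plus_perp)
  qed
  thus ?thesis unfolding k_span[symmetric] by (intro span_minimal) auto
qed

end

section \<open>The adapted orthonormal basis\<close>

lemma image_atLeastLessThan_double: "f ` {r..<2*r} = (\<lambda>l. f (r + l)) ` {..<(r::nat)}"
proof
  show "f ` {r..<2*r} \<subseteq> (\<lambda>l. f (r + l)) ` {..<r}"
  proof
    fix y assume "y \<in> f ` {r..<2*r}"
    then obtain x where "x \<in> {r..<2*r}" "y = f x" by auto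
    thus "y \<in> (\<lambda>l. f (r + l)) ` {..<r}" by (intro image_eqI[where x = "x - r"]) auto
  qed
qed auto

locale adapted_basis = degenerate_pair +
  fixes e :: "nat \<Rightarrow> 'a"
  assumes e_lower: "\<And>i j. i < dim T \<Longrightarrow> j < dim T \<Longrightarrow> B (e i) (e j) = (if i = j then -1 else 0)"
    and e_upper: "\<And>i j. i < dim T \<Longrightarrow> j < dim T \<Longrightarrow>
      B (e (dim T + i)) (e (dim T + j)) = (if i = j then 1 else 0)"
    and e_T: "\<And>i. i < dim T \<Longrightarrow> e i \<in> T"
    and e_Tperp: "\<And>i. i < dim T \<Longrightarrow> e (dim T + i) \<in> orth_compl B T"
    and e_P: "\<And>i. i < dim T \<Longrightarrow> e i + e (dim T + i) \<in> P"
begin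

lemma e_orthonormal:
  assumes "i < 2 * r" "j < 2 * r"
  shows "B (e i) (e j) = (if i = j then if i < r then -1 else 1 else 0)"
proof -
  consider "i < r" "j < r" | "i < r" "\<not> j < r" | "\<not> i < r" "j < r" | "\<not> i < r" "\<not> j < r"
    by blast
  then show ?thesis
  proof cases
    case 1 then show ?thesis by (simp add: e_lower)
  next
    case 2 then show ?thesis using orth_T_Tperp(1)[OF e_T e_Tperp, of i "j - r"] assms by simp
  next
    case 3 then show ?thesis using orth_T_Tperp(2)[OF e_T e_Tperp, of j "i - r"] assms by simp
  next
    case 4 then show ?thesis using e_upper[of "i - r" "j - r"] assms by auto
  qed
qed

lemma e_pair_lower: "i < r \<Longrightarrow> j < r \<Longrightarrow> B (e i + e (r + i)) (e j) = (if i = j then -1 else 0)"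
  and e_pair_upper: "i < r \<Longrightarrow> j < r \<Longrightarrow> B (e i + e (r + i)) (e (r + j)) = (if i = j then 1 else 0)"
  by (simp_all add: bilinear_ladd[OF bil] e_orthonormal)

lemma par_e_pair: "i < r \<Longrightarrow> par (e i + e (r + i)) = e i"
  by (rule par_part_eqI) (simp_all add: e_T e_Tperp)

lemma perp_e_pair: "i < r \<Longrightarrow> perp (e i + e (r + i)) = e (r + i)"
  by (simp add: perp_part_def par_e_pair)

lemma lin_indep_e: "lin_indep_family e (2 * r)"
  by (rule lin_indep_family_biorthogonal[OF bil, where g = e and d = "\<lambda>j. if j < r then -1 else 1::real"])
    (simp_all add: e_orthonormal)

lemma span_e_lower: "span (e ` {..<r}) = Kpar"
proof (rule span_lin_indep_family_eq)
  show "lin_indep_family e r"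
    by (rule lin_indep_family_biorthogonal[OF bil, where g = e and d = "\<lambda>_. -1::real"])
      (simp_all add: e_lower)
  show "e i \<in> Kpar" if "i < r" for i
    unfolding Kpar_eq by (rule image_eqI[where f = par, OF par_e_pair[OF that, symmetric] e_P[OF that]])
qed (use dim_span_lin_indep_family[OF lin_indep_par_k] in simp_all)

lemma span_e_upper: "span (e ` {r..<2 * r}) = Kperp"
  unfolding image_atLeastLessThan_double
proof (rule span_lin_indep_family_eq)
  show "lin_indep_family (\<lambda>i. e (r + i)) r"
    by (rule lin_indep_family_biorthogonal[OF bil, where g = "\<lambda>i. e (r + i)" and d = "\<lambda>_. 1::real"])
      (simp_all add: e_upper)
  show "e (r + i) \<in> Kperp" if "i < r" for i
    unfolding Kperp_eq by (rule image_eqI[where f = perp, OF perp_e_pair[OF that, symmetric] e_P[OF that]])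
qed (use dim_span_lin_indep_family[OF lin_indep_perp_k] in simp_all)

lemma P_eq_span_e_pairs: "P = span ((\<lambda>i. e i + e (r + i)) ` {..<r})"
  by (rule span_lin_indep_family_eq[symmetric, OF subspace_P
        lin_indep_family_biorthogonal[OF bil, where g = e and d = "\<lambda>_. -1::real"]])
    (simp_all add: e_pair_lower e_P dim_P)

lemma span_e: "span (e ` {..<2 * r}) = PT"
proof -
  have "{..<2 * r} = {..<r} \<union> {r..<2 * r}" by auto
  thus ?thesis by (simp only: image_Un span_Un span_e_lower span_e_upper)
qed

lemma dim_PT: "dim PT = 2 * r"
  using dim_span_lin_indep_family[OF lin_indep_e] by (simp add: span_e)

lemma orthonormal_basis_e: "orthonormal_basis B PT e (2 * r)"
  unfolding orthonormal_basis_def using lin_indep_e span_e by (simp add: e_orthonormal)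

lemma Kpar_Kperp_in_PT: "Kpar \<subseteq> PT" "Kperp \<subseteq> PT"
  by (simp_all add: span_mono)

lemma neg_def_Kpar: "neg_def_on B Kpar" and pos_def_Kperp: "pos_def_on B Kperp"
  using neg_def_T Kpar_subset_T pos_def_Tperp Kperp_subset_Tperp
  by (auto simp: neg_def_on_def pos_def_on_def)

lemma sig_pos_PT: "sig_pos B PT = r" and sig_neg_PT: "sig_neg B PT = r"
  using sig_pos_eqI[of PT Kperp B Kpar] sig_neg_eqI[of PT Kpar B Kperp]
    Kpar_Kperp_in_PT neg_def_Kpar pos_def_Kperp dim_PT
    dim_span_lin_indep_family[OF lin_indep_par_k] dim_span_lin_indep_family[OF lin_indep_perp_k]
  by simp_all

text \<open>Subtracting a suitable combination of the null vectors \<open>e i + e (r + i)\<close> kills the pairing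
  with every \<open>e i\<close>, \<open>i < r\<close>; isotropy of \<open>v\<close> against \<open>P\<close> then kills the pairing with the
  \<open>e (r + i)\<close> as well.\<close>

lemma orth_P_iff: "(\<forall>w\<in>P. B v w = 0) \<longleftrightarrow> (\<exists>vb\<in>orth_compl B PT. v - vb \<in> P)"
proof
  assume orth_P: "\<forall>w\<in>P. B v w = 0"
  define x where "x = (\<Sum>i<r. (- B v (e i)) *\<^sub>R (e i + e (r + i)))"
  have "x \<in> P" unfolding x_def using e_P subspace_P by (intro subspace_sum subspace_scale) auto
  have lower_upper: "B (v - x) (e j) = 0 \<and> B (v - x) (e (r + j)) = 0" if j: "j < r" for j
  proof -
    have "B x (e j) = B v (e j)" "B x (e (r + j)) = - B v (e j)"
      using j by (simp_all add: x_def bilinear_sum_left[OF bil] bilinear_lmul[OF bil] bilinear_lneg[OF bil]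
          e_pair_lower e_pair_upper if_distrib cong: if_cong)
    moreover have "B v (e j) + B v (e (r + j)) = 0"
      using orth_P[rule_format, OF e_P[OF j]] by (simp add: bilinear_radd[OF bil])
    ultimately show ?thesis by (simp add: bilinear_lsub[OF bil])
  qed
  have "B (v - x) (e j) = 0" if "j < 2 * r" for j
  proof (cases "j < r")
    case False
    hence "j - r < r" "j = r + (j - r)" using that by auto
    thus ?thesis using lower_upper by metis
  qed (use lower_upper in blast)
  hence "v - x \<in> orth_compl B PT"
    unfolding span_e[symmetric] orth_compl_span[OF bil] by (simp add: orth_compl_def)
  thus "\<exists>vb\<in>orth_compl B PT. v - vb \<in> P" using \<open>x \<in> P\<close> by force
next
  assume "\<exists>vb\<in>orth_compl B PT. v - vb \<in> P"
  then obtain vb where vb: "vb \<in> orth_compl B PT" "v - vb \<in> P" by blast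
  show "\<forall>w\<in>P. B v w = 0"
  proof
    fix w assume w: "w \<in> P"
    have "B v w = B vb w + B (v - vb) w" by (simp add: bilinear_lsub[OF bil])
    thus "B v w = 0" using vb P_subset_PT w isotropic_P by (auto simp: orth_compl_def)
  qed
qed

end

lemma (in degenerate_pair) adapted_basis_exists: "\<exists>e. adapted_basis B T P k e"
proof -
  have "subspace Kpar" "neg_def_on B Kpar" using neg_def_T Kpar_subset_T by (auto simp: neg_def_on_def)
  from neg_def_orthonormal_family_exists[OF bil sym this]
  have "\<exists>e. (\<forall>i<r. e i \<in> Kpar) \<and> (\<forall>i<r. \<forall>j<r. B (e i) (e j) = (if i = j then -1 else 0))"
    unfolding dim_span_lin_indep_family[OF lin_indep_par_k] .
  then obtain e0 where e0: "\<forall>i<r. e0 i \<in> Kpar"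
    "\<forall>i<r. \<forall>j<r. B (e0 i) (e0 j) = (if i = j then -1 else 0)"
    by blast
  have "\<forall>i<r. e0 i \<in> par ` P" using e0(1) unfolding Kpar_eq .
  hence "\<forall>i. \<exists>x. i < r \<longrightarrow> x \<in> P \<and> par x = e0 i" by (auto simp: image_iff) metis
  from choice[OF this] obtain p where p: "\<And>i. i < r \<Longrightarrow> p i \<in> P \<and> par (p i) = e0 i"
    by blast
  define e where "e i = (if i < r then e0 i else perp (p (i - r)))" for i
  have "adapted_basis B T P k e"
  proof (intro adapted_basis.intro degenerate_pair_axioms adapted_basis_axioms.intro)
    fix i j assume i: "i < r" and j: "j < r"
    show "B (e i) (e j) = (if i = j then -1 else 0)" using e0(2) i j by (simp add: e_def)
    show "B (e (r + i)) (e (r + j)) = (if i = j then 1 else 0)"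
      using par_perp_on_P[of "p i" "p j"] p[OF i] p[OF j] e0(2) i j by (cases "i = j") (simp_all add: e_def)
  next
    fix i assume i: "i < r"
    show "e i \<in> T" using e0(1) Kpar_subset_T i by (auto simp: e_def)
    show "e (r + i) \<in> Tperp" by (simp add: e_def perp_part_mem)
    show "e i + e (r + i) \<in> P" using p[OF i] i par_plus_perp[of "p i"] by (simp add: e_def)
  qed
  thus ?thesis by blast
qed

theorem (in degenerate_pair) structure_theorem:
  "lin_indep_family (\<lambda>i. par (k i)) r \<and> lin_indep_family (\<lambda>i. perp (k i)) r
    \<and> dim PT = 2 * r \<and> sig_pos B PT = r \<and> sig_neg B PT = r
    \<and> (\<exists>e. orthonormal_basis B PT e (2 * r)
          \<and> span (e ` {..<r}) = Kpar \<and> span (e ` {r..<2 * r}) = Kperp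
          \<and> P = span ((\<lambda>i. e i + e (r + i)) ` {..<r}))
    \<and> (\<forall>v. (\<forall>w\<in>P. B v w = 0) \<longleftrightarrow> (\<exists>vb\<in>orth_compl B PT. v - vb \<in> P))"
proof -
  obtain e where "adapted_basis B T P k e" using adapted_basis_exists by blast
  then interpret adapted_basis B T P k e .
  show ?thesis
    using lin_indep_par_k lin_indep_perp_k dim_PT sig_pos_PT sig_neg_PT orthonormal_basis_e
      span_e_lower span_e_upper P_eq_span_e_pairs orth_P_iff
    by blast
qed

theorem mainTheorem11:
  fixes B :: "'a::euclidean_space \<Rightarrow> 'a \<Rightarrow> real"
    and p q r :: nat and P T :: "'a set" and k :: "nat \<Rightarrow> 'a"
  assumes form: "nondeg_sym_form B"
    and p_def: "p = sig_neg B UNIV" and q_def: "q = sig_pos B UNIV"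
    and r_def: "r = min p q"
    and P_tdeg: "totally_degenerate B P" and P_dim: "dim P = r"
    and k_basis: "lin_indep_family k r" "span (k ` {..<r}) = P"
    and T_sub: "subspace T" and T_dim: "dim T = r"
    and T_def: "(p \<le> q \<and> neg_def_on B T) \<or> (q \<le> p \<and> pos_def_on B T)"
  shows "lin_indep_family (\<lambda>i. par_part B T (k i)) r
    \<and> lin_indep_family (\<lambda>i. perp_part B T (k i)) r
    \<and> (let PT = span ((\<lambda>i. par_part B T (k i)) ` {..<r} \<union> (\<lambda>i. perp_part B T (k i)) ` {..<r})
       in dim PT = 2 * r \<and> sig_pos B PT = r \<and> sig_neg B PT = r
        \<and> (\<exists>e. orthonormal_basis B PT e (2 * r)
              \<and> span (e ` {..<r}) = span ((\<lambda>i. par_part B T (k i)) ` {..<r})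
              \<and> span (e ` {r..<2 * r}) = span ((\<lambda>i. perp_part B T (k i)) ` {..<r})
              \<and> P = span ((\<lambda>i. e i + e (r + i)) ` {..<r}))
        \<and> (\<forall>v. (\<forall>w\<in>P. B v w = 0) \<longleftrightarrow> (\<exists>vb\<in>orth_compl B PT. v - vb \<in> P)))"
proof -
  have bil: "bilinear B" and sym: "\<And>x y. B x y = B y x" and nondeg: "\<And>x. (\<forall>y. B x y = 0) \<Longrightarrow> x = 0"
    using form by (auto simp: nondeg_sym_form_def)
  from T_def consider "p \<le> q" "neg_def_on B T" | "q \<le> p" "pos_def_on B T" by blast
  then show ?thesis
  proof cases
    case 1
    have "degenerate_pair B T P k"
    proof unfold_locales
      fix S :: "'a set" assume "subspace S" "neg_def_on B S"
      thus "dim S \<le> dim T" using dim_le_sig_neg[of S B] p_def r_def 1 T_dim by simp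
    qed (use bil sym nondeg T_sub 1 P_tdeg P_dim T_dim k_basis in simp_all)
    from degenerate_pair.structure_theorem[OF this] show ?thesis unfolding T_dim Let_def .
  next
    case 2
    txt \<open>Negating the form swaps the two cases and changes none of the notions in the claim.\<close>
    have "degenerate_pair (\<lambda>x y. - B x y) T P k"
    proof unfold_locales
      fix S :: "'a set" assume "subspace S" "neg_def_on (\<lambda>x y. - B x y) S"
      thus "dim S \<le> dim T" using dim_le_sig_neg[of S "\<lambda>x y. - B x y"] q_def r_def 2 T_dim
        by (simp add: sig_neg_uminus)
    qed (use bilinear_uminus[OF bil] sym nondeg T_sub 2 P_tdeg P_dim T_dim k_basis in
          \<open>simp_all add: neg_def_on_uminus totally_degenerate_uminus\<close>)
    from degenerate_pair.structure_theorem[OF this] show ?thesis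
      unfolding T_dim Let_def par_part_uminus perp_part_uminus sig_pos_uminus sig_neg_uminus
        orthonormal_basis_uminus orth_compl_uminus neg_equal_0_iff_equal by blast
  qed
qed

end
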